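(* Let $n\ge1$. (1) The number of plane trees with $n$ edges having exactly one old leaf is $2^{n-1}$. (2) The number of plane trees with $n$ edges having no young leaves is the Motzkin number $M_{n-1}$.
   Context: A plane tree is a rooted tree in which the children of each vertex are linearly ordered (left to right). A leaf is a vertex with no children; by convention the tree consisting of a single vertex (no edges) has no leaves. A leaf is an old leaf if it is the leftmost child of its parent, and a young leaf otherwise. The Motzkin number $M_m$ is the number of lattice paths from $(0,0)$ to $(m,0)$ with steps $(1,1),(1,-1),(1,0)$ never going below the $x$-axis; equivalently $M_m=\sum_{r}\binom{m}{2r}\frac{1}{r+1}\binom{2r}{r}$. *)

theory Defs
  imports Main
begin

datatype ptree = Node "ptree list"

fun edges :: "ptree \<Rightarrow> nat" where
  "edges (Node ts) = length ts + sum_list (map edges ts)"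

fun is_leaf_tree :: "ptree \<Rightarrow> bool" where
  "is_leaf_tree (Node ts) = (ts = [])"

text \<open>Old leaves: leaves that are the leftmost child of their parent.
  The root is never a leaf (it has no parent), so a single vertex has no leaves.\<close>
fun old_leaves :: "ptree \<Rightarrow> nat" where
  "old_leaves (Node ts) =
     (case ts of [] \<Rightarrow> 0 | t # _ \<Rightarrow> (if is_leaf_tree t then 1 else 0))
     + sum_list (map old_leaves ts)"

fun young_leaves :: "ptree \<Rightarrow> nat" where
  "young_leaves (Node ts) =
     (case ts of [] \<Rightarrow> 0 | _ # rs \<Rightarrow> length (filter is_leaf_tree rs))
     + sum_list (map young_leaves ts)"

text \<open>Motzkin numbers via the given binomial/Catalan sum (Catalan numbers are exact integers).\<close>
definition motzkin :: "nat \<Rightarrow> nat" where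
  "motzkin m = (\<Sum>r\<le>m. (m choose (2*r)) * ((2*r choose r) div (r + 1)))"

end

theory Submission
  imports Defs
begin

(* (1) A tree with n + 1 >= 2 edges and exactly one old leaf arises in exactly one way from
   such a tree with n edges: by hanging it below a new root, or by appending a leaf as the
   last child of its root. So the count doubles with every edge.

   (2) Count forests of k trees without young leaves, each with at least one edge, by
   looking at the first tree: it is a single edge, or its root has a single child, which
   is not a leaf and replaces it, or the second child of its root can be split off as a
   new second tree. This is the Motzkin recursion F(n+1, k+1) = F(n, k) + F(n, k+1) +
   F(n, k+2), so F(n+1, k+1) counts Motzkin paths of length n from height k down to 0.
   Choosing the positions of the level steps writes these as binomial sums of Dyck path
   counts, which at height 0 are Catalan numbers by the ballot formula. *)

(* dyck_paths j h and motzkin_paths m h count paths with j (resp. m) steps from height h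
   down to 0 that never go below 0, with steps -1, +1 (resp. -1, 0, +1). *)
fun dyck_paths :: "nat \<Rightarrow> nat \<Rightarrow> nat" where
  "dyck_paths 0 h = (if h = 0 then 1 else 0)"
| "dyck_paths (Suc j) h = (if h = 0 then 0 else dyck_paths j (h - 1)) + dyck_paths j (Suc h)"

lemma dyck_paths_eq_0_if_less: "j < h \<Longrightarrow> dyck_paths j h = 0"
  by (induction j arbitrary: h) auto

lemma dyck_paths_eq_0_if_odd: "odd (j + h) \<Longrightarrow> dyck_paths j h = 0"
  by (induction j arbitrary: h) (auto simp: odd_pos)

lemma dyck_paths_ballot:
  "dyck_paths (2*u + h) h + ((2*u + h) choose (u + h + 1)) = (2*u + h) choose u"
proof (induction "2*u + h" arbitrary: u h)
  case 0
  then show ?case by simp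
next
  case (Suc j)
  show ?case
  proof (cases h)
    case 0
    then obtain u' where u: "u = Suc u'" using Suc.hyps(2) by (cases u) auto
    with 0 Suc.hyps(2) have "j = 2*u' + 1" by simp
    then have "dyck_paths j 1 + (j choose (u' + 2)) = j choose u'"
      using Suc.hyps(1) by fastforce
    then show ?thesis using Suc.hyps(2) u 0 by simp
  next
    case (Suc h')
    show ?thesis
    proof (cases u)
      case 0
      with \<open>h = Suc h'\<close> Suc.hyps(2) have "j = h'" by simp
      then have "dyck_paths j j = 1"
        using Suc.hyps(1)[of 0 j] by (simp add: binomial_eq_0)
      then show ?thesis using \<open>j = h'\<close> \<open>h = Suc h'\<close> 0 Suc.hyps(2)
        by (simp add: dyck_paths_eq_0_if_less)
    next
      case (Suc u')
      have "dyck_paths j h' + (j choose (u + h' + 1)) = j choose u"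
        using Suc.hyps(1)[of u h'] Suc.hyps(2) \<open>h = Suc h'\<close> by simp
      moreover have "dyck_paths j (Suc h) + (j choose (u + h' + 2)) = j choose u'"
        using Suc.hyps(1)[of u' "Suc h"] Suc.hyps(2) \<open>h = Suc h'\<close> \<open>u = Suc u'\<close>
        by simp
      ultimately show ?thesis
        using Suc.hyps(2) \<open>h = Suc h'\<close> \<open>u = Suc u'\<close> by simp
    qed
  qed
qed

lemma dyck_paths_catalan: "dyck_paths (2*u) 0 = (2*u choose u) div (u + 1)"
proof -
  define c where "c = (2*u) choose u"
  define c' where "c' = (2*u) choose (u + 1)"
  have "(u + 1) * c' = (2*u) * ((2*u - 1) choose u)"
    unfolding c'_def using binomial_absorption by simp
  also have "\<dots> = (2*u - u) * c"
    unfolding c_def by (rule binomial_absorb_comp[symmetric])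
  finally have "(u + 1) * c' = u * c" by simp
  moreover have "dyck_paths (2*u) 0 + c' = c"
    using dyck_paths_ballot[of u 0] by (simp add: c_def c'_def)
  ultimately have "(u + 1) * dyck_paths (2*u) 0 + u * c = (u + 1) * c"
    by (metis add_mult_distrib2)
  then have "(u + 1) * dyck_paths (2*u) 0 = c"
    by simp
  then show ?thesis
    unfolding c_def by (metis nonzero_mult_div_cancel_left Suc_eq_plus1 nat.distinct(1))
qed

fun motzkin_paths :: "nat \<Rightarrow> nat \<Rightarrow> nat" where
  "motzkin_paths 0 h = (if h = 0 then 1 else 0)"
| "motzkin_paths (Suc m) h =
     motzkin_paths m h + (if h = 0 then 0 else motzkin_paths m (h - 1)) + motzkin_paths m (Suc h)"

lemma motzkin_paths_binomial_sum:
  "motzkin_paths m h = (\<Sum>j\<le>m. (m choose j) * dyck_paths j h)"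
proof (induction m arbitrary: h)
  case 0
  then show ?case by simp
next
  case (Suc m)
  have "(\<Sum>j\<le>Suc m. (Suc m choose j) * dyck_paths j h)
      = dyck_paths 0 h + (\<Sum>i\<le>m. ((m choose i) + (m choose Suc i)) * dyck_paths (Suc i) h)"
    by (subst sum.atMost_Suc_shift) simp
  also have "\<dots> = (dyck_paths 0 h + (\<Sum>i\<le>m. (m choose Suc i) * dyck_paths (Suc i) h))
      + (\<Sum>i\<le>m. (m choose i) * dyck_paths (Suc i) h)"
    by (simp add: algebra_simps sum.distrib)
  also have "dyck_paths 0 h + (\<Sum>i\<le>m. (m choose Suc i) * dyck_paths (Suc i) h)
      = (\<Sum>j\<le>Suc m. (m choose j) * dyck_paths j h)"
    by (subst sum.atMost_Suc_shift) simp
  also have "\<dots> = motzkin_paths m h"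
    using Suc.IH by simp
  also have "(\<Sum>i\<le>m. (m choose i) * dyck_paths (Suc i) h)
      = (if h = 0 then 0 else motzkin_paths m (h - 1)) + motzkin_paths m (Suc h)"
    using Suc.IH by (simp add: algebra_simps sum.distrib)
  finally show ?case by simp
qed

lemma motzkin_paths_height_0: "motzkin_paths m 0 = motzkin m"
proof -
  have "motzkin m = (\<Sum>r\<le>m. (m choose (2*r)) * dyck_paths (2*r) 0)"
    unfolding motzkin_def by (simp add: dyck_paths_catalan)
  also have "\<dots> = (\<Sum>j\<in>(\<lambda>r. 2*r) ` {..m}. (m choose j) * dyck_paths j 0)"
    by (simp add: sum.reindex inj_on_def)
  also have "\<dots> = (\<Sum>j\<le>2*m. (m choose j) * dyck_paths j 0)"
  proof (rule sum.mono_neutral_left)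
    show "\<forall>j\<in>{..2*m} - (\<lambda>r. 2*r) ` {..m}. (m choose j) * dyck_paths j 0 = 0"
    proof
      fix j assume j: "j \<in> {..2*m} - (\<lambda>r. 2*r) ` {..m}"
      have "odd j"
      proof
        assume "even j"
        then obtain r where "j = 2*r" ..
        with j show False by auto
      qed
      then show "(m choose j) * dyck_paths j 0 = 0" by (simp add: dyck_paths_eq_0_if_odd)
    qed
  qed auto
  also have "\<dots> = (\<Sum>j\<le>m. (m choose j) * dyck_paths j 0)"
    by (rule sum.mono_neutral_right) auto
  finally show ?thesis
    by (simp add: motzkin_paths_binomial_sum)
qed

lemma is_leaf_tree_iff: "is_leaf_tree t \<longleftrightarrow> t = Node []"
  by (cases t) auto

lemma edges_eq_0_iff: "edges t = 0 \<longleftrightarrow> t = Node []"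
  by (cases t) auto

lemma old_leaves_pos: "\<not> is_leaf_tree t \<Longrightarrow> 0 < old_leaves t"
proof (induction t)
  case (Node ts)
  then obtain h r where "ts = h # r" by (cases ts) auto
  with Node show ?case by (cases "is_leaf_tree h") auto
qed

lemma old_leaves_eq_0_iff: "old_leaves t = 0 \<longleftrightarrow> is_leaf_tree t"
  using old_leaves_pos[of t] by (cases "is_leaf_tree t") (auto simp: is_leaf_tree_iff)

lemma old_leaves_snoc:
  "ts \<noteq> [] \<Longrightarrow> old_leaves (Node (ts @ [t])) = old_leaves (Node ts) + old_leaves t"
  by (cases ts) auto

fun append_leaf :: "ptree \<Rightarrow> ptree" where
  "append_leaf (Node ts) = Node (ts @ [Node []])"

definition one_old_leaf_trees :: "nat \<Rightarrow> ptree set" where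
  "one_old_leaf_trees n = {t. edges t = n \<and> old_leaves t = 1}"

lemma one_old_leaf_trees_Suc_0: "one_old_leaf_trees (Suc 0) = {Node [Node []]}"
proof (intro equalityI subsetI)
  fix t assume "t \<in> one_old_leaf_trees (Suc 0)"
  then obtain ts where "t = Node ts" "length ts + sum_list (map edges ts) = 1"
    unfolding one_old_leaf_trees_def by (cases t) auto
  then show "t \<in> {Node [Node []]}"
    by (cases ts) (auto simp: edges_eq_0_iff)
qed (simp add: one_old_leaf_trees_def)

lemma one_old_leaf_trees_Suc_Suc:
  "one_old_leaf_trees (Suc (Suc n)) =
     (\<lambda>t. Node [t]) ` one_old_leaf_trees (Suc n) \<union> append_leaf ` one_old_leaf_trees (Suc n)"
  (is "_ = ?planted \<union> ?extended")
proof (intro equalityI subsetI)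
  fix t assume "t \<in> one_old_leaf_trees (Suc (Suc n))"
  then obtain ts where t: "t = Node ts" and edges: "edges (Node ts) = Suc (Suc n)"
    and old: "old_leaves (Node ts) = 1"
    unfolding one_old_leaf_trees_def by (cases t) auto
  from old have "ts \<noteq> []" by auto
  then obtain ts' x where ts: "ts = ts' @ [x]"
    using rev_exhaust by blast
  show "t \<in> ?planted \<union> ?extended"
  proof (cases "ts' = []")
    case True
    with edges ts have "edges x = Suc n" by simp
    then have "\<not> is_leaf_tree x" by (auto simp: is_leaf_tree_iff)
    with old ts True have "old_leaves x = 1" by simp
    with \<open>edges x = Suc n\<close> t ts True show ?thesis by (auto simp: one_old_leaf_trees_def)
  next
    case False
    then have "0 < old_leaves (Node ts')" by (intro old_leaves_pos) auto
    moreover have "old_leaves (Node ts') + old_leaves x = 1"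
      using old unfolding ts old_leaves_snoc[OF False] .
    ultimately have "old_leaves (Node ts') = 1" "old_leaves x = 0" by linarith+
    then have "x = Node []" by (simp add: old_leaves_eq_0_iff is_leaf_tree_iff)
    with edges ts have "edges (Node ts') = Suc n" by simp
    with \<open>old_leaves (Node ts') = 1\<close> \<open>x = Node []\<close>
    have "Node ts' \<in> one_old_leaf_trees (Suc n)" "t = append_leaf (Node ts')"
      using t ts by (simp_all add: one_old_leaf_trees_def)
    then show ?thesis by blast
  qed
next
  fix t assume "t \<in> ?planted \<union> ?extended"
  then show "t \<in> one_old_leaf_trees (Suc (Suc n))"
  proof (elim UnE imageE)
    fix s assume s: "s \<in> one_old_leaf_trees (Suc n)" and "t = Node [s]"
    from s have "\<not> is_leaf_tree s" by (auto simp: one_old_leaf_trees_def is_leaf_tree_iff)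
    with s \<open>t = Node [s]\<close> show ?thesis by (simp add: one_old_leaf_trees_def)
  next
    fix s assume s: "s \<in> one_old_leaf_trees (Suc n)" and "t = append_leaf s"
    obtain ts where "s = Node ts" by (cases s)
    with s have "ts \<noteq> []" by (auto simp: one_old_leaf_trees_def)
    then have "old_leaves t = old_leaves s + old_leaves (Node [])"
      unfolding \<open>t = append_leaf s\<close> \<open>s = Node ts\<close> append_leaf.simps
      by (rule old_leaves_snoc)
    moreover have "edges t = Suc (edges s)"
      unfolding \<open>t = append_leaf s\<close> \<open>s = Node ts\<close> by simp
    ultimately show ?thesis
      using s by (simp add: one_old_leaf_trees_def)
  qed
qed

lemma finite_one_old_leaf_trees: "finite (one_old_leaf_trees (Suc n))"
  by (induction n) (simp_all add: one_old_leaf_trees_Suc_0 one_old_leaf_trees_Suc_Suc)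

lemma card_one_old_leaf_trees: "card (one_old_leaf_trees (Suc n)) = 2 ^ n"
proof (induction n)
  case 0
  then show ?case by (simp add: one_old_leaf_trees_Suc_0)
next
  case (Suc n)
  let ?T = "one_old_leaf_trees (Suc n)"
  have inj_Node: "inj_on (\<lambda>t. Node [t]) ?T"
    by (simp add: inj_on_def)
  have inj_append_leaf: "inj_on append_leaf ?T"
    by (rule inj_onI) (metis append_leaf.simps append1_eq_conv ptree.exhaust ptree.inject)
  have "Node [s] \<noteq> append_leaf u" if "s \<in> ?T" for s u
    using that by (cases u) (auto simp: one_old_leaf_trees_def append_eq_Cons_conv)
  then have disjoint: "(\<lambda>t. Node [t]) ` ?T \<inter> append_leaf ` ?T = {}"
    by blast
  have "card (one_old_leaf_trees (Suc (Suc n)))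
      = card ((\<lambda>t. Node [t]) ` ?T) + card (append_leaf ` ?T)"
    unfolding one_old_leaf_trees_Suc_Suc
    using finite_one_old_leaf_trees disjoint by (intro card_Un_disjoint) auto
  also have "\<dots> = 2 ^ Suc n"
    using Suc.IH inj_Node inj_append_leaf by (simp add: card_image)
  finally show ?case .
qed

definition young_free_forests :: "nat \<Rightarrow> nat \<Rightarrow> ptree list set" where
  "young_free_forests n k = {ts. length ts = k \<and> sum_list (map edges ts) = n \<and>
     (\<forall>t\<in>set ts. \<not> is_leaf_tree t \<and> young_leaves t = 0)}"

definition cons_edge :: "ptree list \<Rightarrow> ptree list" where
  "cons_edge ts = Node [Node []] # ts"

fun plant :: "ptree list \<Rightarrow> ptree list" where
  "plant (t # ts) = Node [t] # ts"
| "plant [] = []"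

fun graft :: "ptree list \<Rightarrow> ptree list" where
  "graft (Node (y # xs) # x # ts) = Node (y # x # xs) # ts"
| "graft ts = ts"

lemma young_free_forests_0: "young_free_forests n 0 = (if n = 0 then {[]} else {})"
  by (auto simp: young_free_forests_def)

lemma young_free_forests_0_Suc: "young_free_forests 0 (Suc k) = {}"
  by (auto simp: young_free_forests_def length_Suc_conv edges_eq_0_iff is_leaf_tree_iff)

lemma young_free_forests_SucE:
  assumes "ts \<in> young_free_forests n (Suc k)"
  obtains y xs r where "ts = Node (y # xs) # r" "length r = k"
proof -
  from assms obtain t r where ts: "ts = t # r" "length r = k" and "\<not> is_leaf_tree t"
    by (auto simp: young_free_forests_def length_Suc_conv)
  then obtain y xs where "t = Node (y # xs)"
    by (cases t) (auto simp: neq_Nil_conv)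
  with ts show ?thesis using that by blast
qed

lemma young_free_forests_Suc_Suc:
  "young_free_forests (Suc n) (Suc k) =
     cons_edge ` young_free_forests n k \<union> plant ` young_free_forests n (Suc k)
     \<union> graft ` young_free_forests n (Suc (Suc k))"
  (is "?F = ?A \<union> ?B \<union> ?C")
proof (intro equalityI subsetI)
  fix ts assume "ts \<in> ?F"
  then obtain y xs r where ts: "ts = Node (y # xs) # r" by (rule young_free_forests_SucE)
  with \<open>ts \<in> ?F\<close> have y: "young_leaves y = 0"
    and xs: "\<forall>t\<in>set xs. \<not> is_leaf_tree t \<and> young_leaves t = 0"
    by (auto simp: young_free_forests_def filter_empty_conv)
  show "ts \<in> ?A \<union> ?B \<union> ?C"
  proof (cases xs)
    case Nil
    show ?thesis
    proof (cases "is_leaf_tree y")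
      case True
      with ts Nil have "ts = cons_edge r" by (simp add: cons_edge_def is_leaf_tree_iff)
      moreover from \<open>ts \<in> ?F\<close> True ts Nil have "r \<in> young_free_forests n k"
        by (simp add: young_free_forests_def is_leaf_tree_iff)
      ultimately show ?thesis by blast
    next
      case False
      with ts Nil have "ts = plant (y # r)" by simp
      moreover from \<open>ts \<in> ?F\<close> False y ts Nil have "y # r \<in> young_free_forests n (Suc k)"
        by (simp add: young_free_forests_def)
      ultimately show ?thesis by blast
    qed
  next
    case (Cons x xr)
    with ts have "ts = graft (Node (y # xr) # x # r)" by simp
    moreover from \<open>ts \<in> ?F\<close> y xs ts Cons
    have "Node (y # xr) # x # r \<in> young_free_forests n (Suc (Suc k))"
      by (simp add: young_free_forests_def filter_empty_conv)
    ultimately show ?thesis by blast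
  qed
next
  fix ts assume "ts \<in> ?A \<union> ?B \<union> ?C"
  then show "ts \<in> ?F"
  proof (elim UnE imageE)
    fix r assume "r \<in> young_free_forests n k" "ts = cons_edge r"
    then show ?thesis by (simp add: young_free_forests_def cons_edge_def)
  next
    fix r assume r: "r \<in> young_free_forests n (Suc k)" and "ts = plant r"
    from r obtain y xs r' where "r = Node (y # xs) # r'" by (rule young_free_forests_SucE)
    with r \<open>ts = plant r\<close> show ?thesis
      by (simp add: young_free_forests_def filter_empty_conv)
  next
    fix r assume r: "r \<in> young_free_forests n (Suc (Suc k))" and "ts = graft r"
    from r obtain y xs r' where r': "r = Node (y # xs) # r'" "length r' = Suc k"
      by (rule young_free_forests_SucE)
    then obtain x r'' where "r' = x # r''"
      by (auto simp: length_Suc_conv)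
    with r r'(1) \<open>ts = graft r\<close> show ?thesis
      by (auto simp: young_free_forests_def filter_empty_conv)
  qed
qed

lemma finite_young_free_forests: "finite (young_free_forests n k)"
proof (induction n arbitrary: k)
  case 0
  then show ?case by (cases k) (simp_all add: young_free_forests_0 young_free_forests_0_Suc)
next
  case (Suc n)
  then show ?case by (cases k) (simp_all add: young_free_forests_0 young_free_forests_Suc_Suc)
qed

lemma card_young_free_forests_Suc_Suc:
  "card (young_free_forests (Suc n) (Suc k)) =
     card (young_free_forests n k) + card (young_free_forests n (Suc k))
     + card (young_free_forests n (Suc (Suc k)))"
proof -
  let ?A = "cons_edge ` young_free_forests n k"
    and ?B = "plant ` young_free_forests n (Suc k)"
    and ?C = "graft ` young_free_forests n (Suc (Suc k))"
  have inj_cons_edge: "inj_on cons_edge (young_free_forests n k)"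
    by (simp add: inj_on_def cons_edge_def)
  have inj_plant: "inj_on plant (young_free_forests n (Suc k))"
  proof (rule inj_onI)
    fix r s
    assume "r \<in> young_free_forests n (Suc k)" "s \<in> young_free_forests n (Suc k)"
    then obtain t r' u s' where "r = t # r'" "s = u # s'"
      by (elim young_free_forests_SucE) auto
    moreover assume "plant r = plant s"
    ultimately show "r = s" by simp
  qed
  have inj_graft: "inj_on graft (young_free_forests n (Suc (Suc k)))"
  proof (rule inj_onI)
    fix r s
    assume "r \<in> young_free_forests n (Suc (Suc k))" "s \<in> young_free_forests n (Suc (Suc k))"
    then obtain y xs x r' y' xs' x' s' where
      "r = Node (y # xs) # x # r'" "s = Node (y' # xs') # x' # s'"
      by (elim young_free_forests_SucE) (auto simp: length_Suc_conv)
    moreover assume "graft r = graft s"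
    ultimately show "r = s" by simp
  qed
  have "?A \<inter> ?B = {}"
  proof -
    have "cons_edge r \<noteq> plant s" if "s \<in> young_free_forests n (Suc k)" for r s
      using that by (elim young_free_forests_SucE) (simp add: cons_edge_def)
    then show ?thesis by blast
  qed
  moreover have "(?A \<union> ?B) \<inter> ?C = {}"
  proof -
    have "cons_edge r \<noteq> graft s \<and> plant r \<noteq> graft s"
      if "s \<in> young_free_forests n (Suc (Suc k))" for r s
    proof -
      from that obtain y xs x s' where "s = Node (y # xs) # x # s'"
        by (elim young_free_forests_SucE) (auto simp: length_Suc_conv)
      then show ?thesis by (cases r) (simp_all add: cons_edge_def)
    qed
    then show ?thesis by blast
  qed
  ultimately have "card (?A \<union> ?B \<union> ?C) = card ?A + card ?B + card ?C"
    by (simp add: card_Un_disjoint finite_young_free_forests)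
  also have "\<dots> = card (young_free_forests n k) + card (young_free_forests n (Suc k))
      + card (young_free_forests n (Suc (Suc k)))"
    using inj_cons_edge inj_plant inj_graft by (simp add: card_image)
  finally show ?thesis
    by (simp only: young_free_forests_Suc_Suc)
qed

lemma card_young_free_forests: "card (young_free_forests (Suc n) (Suc k)) = motzkin_paths n k"
proof (induction n arbitrary: k)
  case 0
  then show ?case
    by (cases k)
      (simp_all add: card_young_free_forests_Suc_Suc young_free_forests_0 young_free_forests_0_Suc)
next
  case (Suc n)
  have "card (young_free_forests (Suc n) k) = (if k = 0 then 0 else motzkin_paths n (k - 1))"
    using Suc.IH by (cases k) (simp_all add: young_free_forests_0)
  then show ?case
    using Suc.IH by (simp add: card_young_free_forests_Suc_Suc)
qed

lemma card_young_leaf_free_trees: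
  "card {t. edges t = Suc n \<and> young_leaves t = 0} = motzkin n"
proof -
  have "young_free_forests (Suc n) 1 = (\<lambda>t. [t]) ` {t. edges t = Suc n \<and> young_leaves t = 0}"
    by (auto simp: young_free_forests_def length_Suc_conv is_leaf_tree_iff)
  then have "card {t. edges t = Suc n \<and> young_leaves t = 0} = card (young_free_forests (Suc n) 1)"
    by (simp add: card_image inj_on_def)
  also have "\<dots> = motzkin n"
    by (simp add: card_young_free_forests motzkin_paths_height_0)
  finally show ?thesis .
qed

theorem mainTheorem5:
  fixes n :: nat
  assumes "n \<ge> 1"
  shows "card {t. edges t = n \<and> old_leaves t = 1} = 2 ^ (n - 1) \<and>
         card {t. edges t = n \<and> young_leaves t = 0} = motzkin (n - 1)"
proof -
  from assms obtain m where "n = Suc m"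
    using not0_implies_Suc by fastforce
  then show ?thesis
    using card_one_old_leaf_trees[of m] card_young_leaf_free_trees[of m]
    by (simp add: one_old_leaf_trees_def)
qed

end
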